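(* Let $\mu,\nu\in\mathbb{C}$. (1) $\mathcal{D}_{\mu,\nu}=\mathcal{D}_{\nu,\mu}$. (2) For every $\lambda\in\mathbb{C}$, the differential equation $\mathcal{D}_{\mu,\nu}u=\lambda u$ has a regular singularity at $x=0$, with characteristic exponents $0,-\mu,-\nu,-\mu-\nu$. (3) If $\mu,\nu$ are real with $\mu,\nu\geq -1$, then $\mathcal{D}_{\mu,\nu}$ (on $C_c^\infty(\mathbb{R}_+)$) is a symmetric operator on $L^2(\mathbb{R}_+,x^{\mu+\nu+1}\,dx)$. (5) $\mathcal{D}_{\mu,\pm1}=\mathcal{S}_{\mu,\pm1}^2-C_{\mu,\pm1}$, where $\mathcal{S}_{\mu,-1}=\frac1x\big(\theta(\theta+\mu)-x^2\big)$, $C_{\mu,-1}=\frac{(\mu+1)^2}{2}$, and $\mathcal{S}_{\mu,+1}=\frac1x\big(\theta(\theta+\mu+2)+\mu+1-x^2\big)$, $C_{\mu,+1}=\frac{(\mu+1)^2}{2}+2$.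
   Context: Let $\theta=x\frac{d}{dx}$ be the Euler operator on functions on $\mathbb{R}_+=(0,\infty)$; products of operators denote composition, and $\frac1x$, $x^2$ denote multiplication operators. For $\mu,\nu\in\mathbb{C}$ define the fourth order differential operator $$\mathcal{D}_{\mu,\nu}=\frac{1}{x^2}\big((\theta+\nu)(\theta+\mu+\nu)-x^2\big)\big(\theta(\theta+\mu)-x^2\big)-\frac{(\mu-\nu)(\mu+\nu+2)}{2}.$$ *)

theory Defs
  imports "HOL-Analysis.Analysis"
begin

text \<open>Functions on R_+ are modelled as complex-valued functions on the reals;
only their values at points x > 0 matter.\<close>

type_synonym cfun = "real \<Rightarrow> complex"

definition theta :: "cfun \<Rightarrow> cfun" where
  "theta f = (\<lambda>x. complex_of_real x * vector_derivative f (at x))"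

definition theta_plus :: "complex \<Rightarrow> cfun \<Rightarrow> cfun" where
  "theta_plus c f = (\<lambda>x. theta f x + c * f x)"

definition inner_op :: "complex \<Rightarrow> cfun \<Rightarrow> cfun" where
  "inner_op \<mu> f = (\<lambda>x. theta (theta_plus \<mu> f) x - (complex_of_real x)^2 * f x)"

definition outer_op :: "complex \<Rightarrow> complex \<Rightarrow> cfun \<Rightarrow> cfun" where
  "outer_op \<mu> \<nu> f = (\<lambda>x. theta_plus \<nu> (theta_plus (\<mu> + \<nu>) f) x - (complex_of_real x)^2 * f x)"

definition Dop :: "complex \<Rightarrow> complex \<Rightarrow> cfun \<Rightarrow> cfun" where
  "Dop \<mu> \<nu> u = (\<lambda>x. outer_op \<mu> \<nu> (inner_op \<mu> u) x / (complex_of_real x)^2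
      - (\<mu> - \<nu>) * (\<mu> + \<nu> + 2) / 2 * u x)"

definition S_minus :: "complex \<Rightarrow> cfun \<Rightarrow> cfun" where
  "S_minus \<mu> u = (\<lambda>x. inner_op \<mu> u x / complex_of_real x)"

definition S_plus :: "complex \<Rightarrow> cfun \<Rightarrow> cfun" where
  "S_plus \<mu> u = (\<lambda>x. (theta (theta_plus (\<mu> + 2) u) x + (\<mu> + 1) * u x
      - (complex_of_real x)^2 * u x) / complex_of_real x)"

fun nderiv :: "nat \<Rightarrow> cfun \<Rightarrow> cfun" where
  "nderiv 0 f = f"
| "nderiv (Suc n) f = (\<lambda>x. vector_derivative (nderiv n f) (at x))"

definition smooth_pos :: "cfun \<Rightarrow> bool" where
  "smooth_pos f \<longleftrightarrow> (\<forall>n. \<forall>x>0. (nderiv n f has_vector_derivative nderiv (Suc n) f x) (at x))"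

definition cc_smooth_pos :: "cfun \<Rightarrow> bool" where
  "cc_smooth_pos f \<longleftrightarrow> smooth_pos f \<and> (\<exists>a b. 0 < a \<and> a \<le> b \<and> (\<forall>x. x \<notin> {a..b} \<longrightarrow> f x = 0))"

text \<open>Linear ODE  sum_{k<=n} a k x * u^(k)(x) = 0  on (0,infinity).\<close>
definition regular_singular_at_0 :: "(nat \<Rightarrow> cfun) \<Rightarrow> nat \<Rightarrow> bool" where
  "regular_singular_at_0 a n \<longleftrightarrow>
     (\<exists>r>0. (\<forall>x\<in>{0<..<r}. a n x \<noteq> 0) \<and>
        (\<forall>k\<le>n. \<exists>g::nat \<Rightarrow> complex. \<forall>x\<in>{0<..<r}.
            (\<lambda>j. g j * (complex_of_real x)^j) sums
              ((complex_of_real x)^(n-k) * a k x / a n x)))"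

text \<open>Indicial polynomial at 0:  sum_k p_k(0) s(s-1)...(s-k+1), where p_k(0) is the
  value at 0 of (the analytic continuation of) x^(n-k) a_k(x)/a_n(x).
  Its roots (with multiplicity) are the characteristic exponents at 0.\<close>
definition indicial_poly :: "(nat \<Rightarrow> cfun) \<Rightarrow> nat \<Rightarrow> complex \<Rightarrow> complex" where
  "indicial_poly a n s =
     (\<Sum>k\<le>n. Lim (at_right 0) (\<lambda>x. (complex_of_real x)^(n-k) * a k x / a n x)
               * (\<Prod>i<k. s - of_nat i))"

end

theory Submission
  imports Defs
begin

text \<open>
  For a function u that is smooth on (0,oo), every operator of the statement is
  evaluated pointwise at x > 0 by the Leibniz and chain rules.  The basic tool is a calculus for
  the Euler operator: if g coincides on (0,oo) with a function G with known first and second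
  derivatives, then theta(theta + c) g, the inner and outer factors of D and S_{mu,+1} have
  explicit values.  Applying this twice gives the normal form

     D_{mu,nu} u (x) = sum_{k<=4} c_k(mu,nu,x) u^(k)(x)       (Dop_eq_Dpoly)

  with explicit coefficients c_k, symmetric in mu and nu; this proves (1).  Computing
  S_{mu,-1}^2 u and S_{mu,+1}^2 u in the same way proves (5).  For (2) the coefficients c_k,
  normalised by the leading one, are even polynomials of degree at most 4 in x, whose values at
  0 give the indicial polynomial s(s+mu)(s+nu)(s+mu+nu).  For (3) a Lagrange identity writes
  x^(mu+nu+1) (D phi . conj psi - phi . conj (D psi)) as the derivative of a bilinear
  concomitant; integrating over an interval containing both supports (Green's formula), the
  boundary terms vanish, which gives the symmetry.
\<close>

declare nderiv.simps[simp del]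

lemma vector_derivative_eq_on_open:
  assumes "open S" "x \<in> S" "\<And>y. y \<in> S \<Longrightarrow> g y = G y" "(G has_vector_derivative D) (at x)"
  shows "vector_derivative g (at x) = D"
  by (rule vector_derivative_at, rule has_vector_derivative_transform_within_open[OF assms(4,1,2)])
     (simp add: assms(3))

lemma smooth_pos_has_derivative:
  assumes "smooth_pos u" "y > 0"
  shows "(nderiv k u has_vector_derivative nderiv (Suc k) u y) (at y within S)"
  using assms unfolding smooth_pos_def by (blast intro: has_vector_derivative_at_within)

lemma smooth_pos_derivatives:
  assumes "smooth_pos u" "y > 0"
  shows "(nderiv 0 u has_vector_derivative nderiv 1 u y) (at y)"
    and "(nderiv 1 u has_vector_derivative nderiv 2 u y) (at y)"
    and "(nderiv 2 u has_vector_derivative nderiv 3 u y) (at y)"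
    and "(nderiv 3 u has_vector_derivative nderiv 4 u y) (at y)"
  using smooth_pos_has_derivative[OF assms, where S = UNIV] by (simp_all add: eval_nat_numeral)

lemma has_vector_derivative_square:
  "D = 2 * of_real y \<Longrightarrow> ((\<lambda>x. (complex_of_real x)^2) has_vector_derivative D) (at y within S)"
  unfolding power2_eq_square by (auto intro!: derivative_eq_intros)

lemma has_vector_derivative_divide_x:
  assumes "(f has_vector_derivative f') (at y within S)"
    "D = f' / of_real y - f y / (of_real y)^2" "y \<noteq> 0"
  shows "((\<lambda>x. f x / complex_of_real x) has_vector_derivative D) (at y within S)"
proof -
  have e: "(\<lambda>x. f x / complex_of_real x) = (\<lambda>x. f x * complex_of_real (inverse x))"
    by (simp add: divide_inverse of_real_inverse)
  have "((\<lambda>x. f x * complex_of_real (inverse x)) has_vector_derivative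
     (f y * of_real (- (inverse y ^ Suc (Suc 0))) + f' * of_real (inverse y))) (at y within S)"
    by (intro has_vector_derivative_mult has_vector_derivative_of_real assms(1) DERIV_inverse assms(3))
  then show ?thesis unfolding e assms(2) using assms(3)
    by (simp add: field_simps power2_eq_square of_real_inverse)
qed

lemma has_vector_derivative_powr:
  assumes "y > 0"
  shows "((\<lambda>x. complex_of_real (x powr s)) has_vector_derivative
          of_real s * of_real (y powr s) / of_real y) (at y)"
proof -
  have "((\<lambda>x. complex_of_real (x powr s)) has_vector_derivative of_real (s * y powr (s - 1))) (at y)"
    by (rule has_vector_derivative_of_real[OF has_real_derivative_powr[OF assms]])
  moreover have "y powr (s - 1) = y powr s / y" using assms by (simp add: powr_diff)
  ultimately show ?thesis by simp
qed

lemma theta_eval: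
  assumes "\<And>y. y > 0 \<Longrightarrow> g y = G y" "\<And>y. y > 0 \<Longrightarrow> (G has_vector_derivative G1 y) (at y)" "x > 0"
  shows "theta g x = of_real x * G1 x"
  unfolding theta_def using assms by (subst vector_derivative_eq_on_open[of "{0<..}" x g G]) auto

lemma theta_plus_eval:
  assumes "\<And>y. y > 0 \<Longrightarrow> g y = G y" "\<And>y. y > 0 \<Longrightarrow> (G has_vector_derivative G1 y) (at y)" "x > 0"
  shows "theta_plus c g x = of_real x * G1 x + c * G x"
  unfolding theta_plus_def using assms theta_eval[OF assms] by simp

context
  fixes g G G1 G2 :: cfun
  assumes g_eq: "\<And>y. y > 0 \<Longrightarrow> g y = G y"
    and G_deriv: "\<And>y. y > 0 \<Longrightarrow> (G has_vector_derivative G1 y) (at y)"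
    and G1_deriv: "\<And>y. y > 0 \<Longrightarrow> (G1 has_vector_derivative G2 y) (at y)"
begin

lemma theta_plus_has_derivative:
  "y > 0 \<Longrightarrow> ((\<lambda>y. of_real y * G1 y + c * G y) has_vector_derivative
      G1 y + of_real y * G2 y + c * G1 y) (at y)"
  using G_deriv G1_deriv by (auto intro!: derivative_eq_intros)

lemma theta_theta_plus_eval:
  "x > 0 \<Longrightarrow> theta (theta_plus c g) x = of_real x * (G1 x + of_real x * G2 x + c * G1 x)"
  by (rule theta_eval[OF theta_plus_eval[OF g_eq G_deriv] theta_plus_has_derivative])

lemma inner_op_eval:
  "x > 0 \<Longrightarrow> inner_op \<mu> g x = of_real x * (G1 x + of_real x * G2 x + \<mu> * G1 x) - (of_real x)^2 * G x"
  unfolding inner_op_def by (simp add: theta_theta_plus_eval g_eq)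

lemma outer_op_eval:
  "x > 0 \<Longrightarrow> outer_op \<mu> \<nu> g x = of_real x * (G1 x + of_real x * G2 x + (\<mu>+\<nu>) * G1 x)
     + \<nu> * (of_real x * G1 x + (\<mu>+\<nu>) * G x) - (of_real x)^2 * G x"
  unfolding outer_op_def
  by (simp add: theta_plus_eval[OF theta_plus_eval[OF g_eq G_deriv] theta_plus_has_derivative] g_eq)

lemma S_plus_eval:
  "x > 0 \<Longrightarrow> S_plus \<mu> g x = (of_real x * (G1 x + of_real x * G2 x + (\<mu>+2) * G1 x)
     + (\<mu>+1) * G x - (of_real x)^2 * G x) / of_real x"
  unfolding S_plus_def by (simp add: theta_theta_plus_eval g_eq)

end

definition Dcoeff :: "complex \<Rightarrow> complex \<Rightarrow> nat \<Rightarrow> complex \<Rightarrow> complex" where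
  "Dcoeff \<mu> \<nu> k y =
     (if k = 4 then y^2
      else if k = 3 then (6 + 2*\<mu> + 2*\<nu>) * y
      else if k = 2 then 7 + 6*\<mu> + 6*\<nu> + \<mu>^2 + \<nu>^2 + 3*\<mu>*\<nu> - 2*y^2
      else if k = 1 then (1+\<mu>)*(1+\<nu>)*(1+\<mu>+\<nu>) / y - (6 + 2*\<mu> + 2*\<nu>) * y
      else if k = 0 then y^2 - (\<mu>+\<nu>+2)*(\<mu>+\<nu>+4)/2
      else 0)"

(* The normal form of D_{mu,nu} at the point y, applied to the jet f k = u^(k)(x). *)
definition Dpoly :: "complex \<Rightarrow> complex \<Rightarrow> complex \<Rightarrow> (nat \<Rightarrow> complex) \<Rightarrow> complex" where
  "Dpoly \<mu> \<nu> y f = (\<Sum>k\<le>4. Dcoeff \<mu> \<nu> k y * f k)"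

lemma sum_atMost_4: "(\<Sum>k\<le>(4::nat). f k) = f 0 + f 1 + f 2 + f 3 + (f 4 :: 'a::comm_monoid_add)"
  by (simp add: eval_nat_numeral atMost_Suc add_ac)

lemma Dpoly_explicit:
  "Dpoly \<mu> \<nu> y f = y^2 * f 4 + (6 + 2*\<mu> + 2*\<nu>) * y * f 3
     + (7 + 6*\<mu> + 6*\<nu> + \<mu>^2 + \<nu>^2 + 3*\<mu>*\<nu> - 2*y^2) * f 2
     + ((1+\<mu>)*(1+\<nu>)*(1+\<mu>+\<nu>) / y - (6 + 2*\<mu> + 2*\<nu>) * y) * f 1
     + (y^2 - (\<mu>+\<nu>+2)*(\<mu>+\<nu>+4)/2) * f 0"
  by (simp add: Dpoly_def Dcoeff_def sum_atMost_4 algebra_simps)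

lemma Dpoly_sym: "Dpoly \<mu> \<nu> = Dpoly \<nu> \<mu>"
  by (intro ext) (simp add: Dpoly_explicit algebra_simps)

lemma inner_op_smooth_eval:
  assumes "smooth_pos u" "y > 0"
  shows "inner_op \<mu> u y = of_real y * (nderiv 1 u y + of_real y * nderiv 2 u y + \<mu> * nderiv 1 u y)
    - (of_real y)^2 * nderiv 0 u y"
  by (rule inner_op_eval[OF _ smooth_pos_derivatives(1,2)[OF assms(1)] assms(2)]) (simp add: nderiv.simps(1))

(* Normal form of D_{mu,nu}: both factors are evaluated with the second order calculus. *)
lemma Dop_eq_Dpoly:
  assumes u: "smooth_pos u" and x: "x > 0"
  shows "Dop \<mu> \<nu> u x = Dpoly \<mu> \<nu> (of_real x) (\<lambda>k. nderiv k u x)"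
proof -
  let ?U = "\<lambda>k. nderiv k u"
  define G where "G = (\<lambda>y. (1+\<mu>) * of_real y * ?U 1 y + (of_real y)^2 * ?U 2 y - (of_real y)^2 * ?U 0 y)"
  define G1 where "G1 = (\<lambda>y. (1+\<mu>) * ?U 1 y + (3+\<mu>) * of_real y * ?U 2 y + (of_real y)^2 * ?U 3 y
     - 2 * of_real y * ?U 0 y - (of_real y)^2 * ?U 1 y)"
  define G2 where "G2 = (\<lambda>y. (4 + 2*\<mu>) * ?U 2 y + (5+\<mu>) * of_real y * ?U 3 y + (of_real y)^2 * ?U 4 y
     - 2 * ?U 0 y - 4 * of_real y * ?U 1 y - (of_real y)^2 * ?U 2 y)"
  have dG: "(G has_vector_derivative G1 y) (at y)" if "y > 0" for y
    unfolding G_def G1_def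
    by (rule derivative_eq_intros smooth_pos_derivatives[OF u that] refl has_vector_derivative_square)+
       (simp add: algebra_simps)
  have dG1: "(G1 has_vector_derivative G2 y) (at y)" if "y > 0" for y
    unfolding G1_def G2_def
    by (rule derivative_eq_intros smooth_pos_derivatives[OF u that] refl has_vector_derivative_square)+
       (simp add: algebra_simps)
  have DD: "outer_op \<mu> \<nu> (inner_op \<mu> u) x = of_real x * (G1 x + of_real x * G2 x + (\<mu>+\<nu>) * G1 x)
     + \<nu> * (of_real x * G1 x + (\<mu>+\<nu>) * G x) - (of_real x)^2 * G x"
    by (rule outer_op_eval[OF _ dG dG1 x]) (simp add: inner_op_smooth_eval[OF u] G_def algebra_simps power2_eq_square)
  have u0: "u x = nderiv 0 u x" by (simp add: nderiv.simps(1))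
  have "complex_of_real x \<noteq> 0" using x by simp
  then show ?thesis unfolding Dop_def DD u0 Dpoly_explicit G_def G1_def G2_def
    by (simp add: field_simps power2_eq_square power3_eq_cube)
qed

lemma S_minus_square:
  assumes u: "smooth_pos u" and x: "x > 0"
  shows "S_minus \<mu> (S_minus \<mu> u) x = Dpoly \<mu> (-1) (of_real x) (\<lambda>k. nderiv k u x) + (\<mu> + 1)^2 / 2 * u x"
proof -
  let ?U = "\<lambda>k. nderiv k u"
  define G where "G = (\<lambda>y. (1+\<mu>) * ?U 1 y + of_real y * ?U 2 y - of_real y * ?U 0 y)"
  define G1 where "G1 = (\<lambda>y. (2+\<mu>) * ?U 2 y + of_real y * ?U 3 y - ?U 0 y - of_real y * ?U 1 y)"
  define G2 where "G2 = (\<lambda>y. (3+\<mu>) * ?U 3 y + of_real y * ?U 4 y - 2 * ?U 1 y - of_real y * ?U 2 y)"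
  have g: "S_minus \<mu> u y = G y" if "y > 0" for y
    using that unfolding S_minus_def G_def inner_op_smooth_eval[OF u that]
    by (simp add: field_simps power2_eq_square)
  have dG: "(G has_vector_derivative G1 y) (at y)" if "y > 0" for y
    unfolding G_def G1_def
    by (rule derivative_eq_intros smooth_pos_derivatives[OF u that] refl)+ (simp add: algebra_simps)
  have dG1: "(G1 has_vector_derivative G2 y) (at y)" if "y > 0" for y
    unfolding G1_def G2_def
    by (rule derivative_eq_intros smooth_pos_derivatives[OF u that] refl)+ (simp add: algebra_simps)
  have SS: "inner_op \<mu> (S_minus \<mu> u) x = of_real x * (G1 x + of_real x * G2 x + \<mu> * G1 x) - (of_real x)^2 * G x"
    by (rule inner_op_eval[OF g dG dG1 x])
  have u0: "u x = nderiv 0 u x" by (simp add: nderiv.simps(1))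
  have "complex_of_real x \<noteq> 0" using x by simp
  then show ?thesis unfolding S_minus_def[of _ "S_minus \<mu> u"] SS u0 Dpoly_explicit G_def G1_def G2_def
    by (simp add: field_simps power2_eq_square power3_eq_cube)
qed

lemma S_plus_square:
  assumes u: "smooth_pos u" and x: "x > 0"
  shows "S_plus \<mu> (S_plus \<mu> u) x = Dpoly \<mu> 1 (of_real x) (\<lambda>k. nderiv k u x) + ((\<mu> + 1)^2 / 2 + 2) * u x"
proof -
  let ?U = "\<lambda>k. nderiv k u"
  define G where "G = (\<lambda>y. (3+\<mu>) * ?U 1 y + of_real y * ?U 2 y + (1+\<mu>) * (?U 0 y / of_real y)
      - of_real y * ?U 0 y)"
  define G1 where "G1 = (\<lambda>y. (4+\<mu>) * ?U 2 y + of_real y * ?U 3 y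
      + (1+\<mu>) * (?U 1 y / of_real y - (?U 0 y / of_real y) / of_real y) - ?U 0 y - of_real y * ?U 1 y)"
  define G2 where "G2 = (\<lambda>y. (5+\<mu>) * ?U 3 y + of_real y * ?U 4 y
      + (1+\<mu>) * (?U 2 y / of_real y - 2 * (?U 1 y / of_real y) / of_real y
                 + 2 * ((?U 0 y / of_real y) / of_real y) / of_real y)
      - 2 * ?U 1 y - of_real y * ?U 2 y)"
  have g: "S_plus \<mu> u y = G y" if "y > 0" for y
  proof -
    have "S_plus \<mu> u y = (of_real y * (?U 1 y + of_real y * ?U 2 y + (\<mu>+2) * ?U 1 y) + (\<mu>+1) * ?U 0 y
        - (of_real y)^2 * ?U 0 y) / of_real y"
      by (rule S_plus_eval[OF _ smooth_pos_derivatives(1,2)[OF u] that]) (simp add: nderiv.simps(1))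
    then show ?thesis using that unfolding G_def by (simp add: field_simps power2_eq_square)
  qed
  have dG: "(G has_vector_derivative G1 y) (at y)" if "y > 0" for y
  proof -
    have y: "y \<noteq> 0" using that by simp
    show ?thesis unfolding G_def G1_def
      by (rule derivative_eq_intros smooth_pos_derivatives[OF u that] refl has_vector_derivative_divide_x y)+
         (use y in \<open>simp add: field_simps power2_eq_square\<close>)
  qed
  have dG1: "(G1 has_vector_derivative G2 y) (at y)" if "y > 0" for y
  proof -
    have y: "y \<noteq> 0" using that by simp
    show ?thesis unfolding G1_def G2_def
      by (rule derivative_eq_intros smooth_pos_derivatives[OF u that] refl has_vector_derivative_divide_x y)+
         (use y in \<open>simp add: field_simps power2_eq_square\<close>)
  qed
  have SS: "S_plus \<mu> (S_plus \<mu> u) x = (of_real x * (G1 x + of_real x * G2 x + (\<mu>+2) * G1 x)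
      + (\<mu>+1) * G x - (of_real x)^2 * G x) / of_real x"
    by (rule S_plus_eval[OF g dG dG1 x])
  have u0: "u x = nderiv 0 u x" by (simp add: nderiv.simps(1))
  have "complex_of_real x \<noteq> 0" using x by simp
  then show ?thesis unfolding SS u0 Dpoly_explicit G_def G1_def G2_def
    by (simp add: field_simps power2_eq_square power3_eq_cube)
qed

definition ode_coeff :: "complex \<Rightarrow> complex \<Rightarrow> complex \<Rightarrow> nat \<Rightarrow> cfun" where
  "ode_coeff \<mu> \<nu> lam k x = Dcoeff \<mu> \<nu> k (of_real x) - (if k = 0 then lam else 0)"

lemma Dop_eigen_equation:
  assumes "smooth_pos u" "x > 0"
  shows "Dop \<mu> \<nu> u x - lam * u x = (\<Sum>k\<le>4. ode_coeff \<mu> \<nu> lam k x * nderiv k u x)"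
  unfolding Dop_eq_Dpoly[OF assms] Dpoly_def ode_coeff_def sum_atMost_4
  by (simp add: nderiv.simps(1) algebra_simps)

(* Coefficients of x^0, x^2 and x^4 in the normalised coefficient x^(4-k) a_k / a_4. *)
definition indicial_coeff :: "complex \<Rightarrow> complex \<Rightarrow> nat \<Rightarrow> complex" where
  "indicial_coeff \<mu> \<nu> k =
     (if k = 0 then 0
      else if k = 1 then (1+\<mu>)*(1+\<nu>)*(1+\<mu>+\<nu>)
      else if k = 2 then 7 + 6*\<mu> + 6*\<nu> + \<mu>^2 + \<nu>^2 + 3*\<mu>*\<nu>
      else if k = 3 then 6 + 2*\<mu> + 2*\<nu>
      else 1)"

definition quadratic_coeff :: "complex \<Rightarrow> complex \<Rightarrow> complex \<Rightarrow> nat \<Rightarrow> complex" where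
  "quadratic_coeff \<mu> \<nu> lam k =
     (if k = 0 then - ((\<mu>+\<nu>+2)*(\<mu>+\<nu>+4)/2 + lam)
      else if k = 1 then - (6 + 2*\<mu> + 2*\<nu>)
      else if k = 2 then -2
      else 0)"

definition quartic_coeff :: "nat \<Rightarrow> complex" where
  "quartic_coeff k = (if k = 0 then 1 else 0)"

lemma normalised_ode_coeff:
  assumes k: "k \<le> 4" and x: "x > 0"
  shows "(complex_of_real x)^(4-k) * ode_coeff \<mu> \<nu> lam k x / ode_coeff \<mu> \<nu> lam 4 x
     = indicial_coeff \<mu> \<nu> k + quadratic_coeff \<mu> \<nu> lam k * (complex_of_real x)^2
       + quartic_coeff k * (complex_of_real x)^4"
proof -
  have "complex_of_real x \<noteq> 0" using x by simp
  moreover have "k = 0 \<or> k = 1 \<or> k = 2 \<or> k = 3 \<or> k = 4" using k by auto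
  ultimately show ?thesis
    by (elim disjE) (simp_all add: ode_coeff_def Dcoeff_def indicial_coeff_def quadratic_coeff_def
        quartic_coeff_def field_simps power2_eq_square eval_nat_numeral)
qed

lemma even_quartic_sums:
  "(\<lambda>j. (if j = 0 then A else if j = 2 then B else if j = 4 then C else 0) * (z::complex)^j)
     sums (A + B * z^2 + C * z^4)"
proof -
  have "(\<lambda>j. (if j = 0 then A else if j = 2 then B else if j = 4 then C else 0) * z^j) sums
     (\<Sum>j\<in>{0,2,4::nat}. (if j = 0 then A else if j = 2 then B else if j = 4 then C else 0) * z^j)"
    by (rule sums_finite) auto
  then show ?thesis by (simp add: add.assoc)
qed

lemma even_quartic_limit:
  assumes "\<And>x. x > 0 \<Longrightarrow> f x = A + B * (complex_of_real x)^2 + C * (complex_of_real x)^4"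
  shows "Lim (at_right 0) f = A"
proof (rule tendsto_Lim)
  have "((\<lambda>x. A + B * (complex_of_real x)^2 + C * (complex_of_real x)^4) \<longlongrightarrow>
      A + B * (complex_of_real 0)^2 + C * (complex_of_real 0)^4) (at_right 0)"
    by (intro tendsto_intros)
  moreover have "eventually (\<lambda>x. A + B * (complex_of_real x)^2 + C * (complex_of_real x)^4 = f x)
      (at_right (0::real))"
    using assms eventually_at_right_less by (metis (mono_tags, lifting) eventually_mono)
  ultimately show "(f \<longlongrightarrow> A) (at_right 0)"
    by (simp add: Lim_transform_eventually)
qed simp

lemma ode_regular_singular: "regular_singular_at_0 (ode_coeff \<mu> \<nu> lam) 4"
  unfolding regular_singular_at_0_def
proof (intro exI[of _ 1] conjI allI impI ballI)
  fix x :: real assume "x \<in> {0<..<1}"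
  then show "ode_coeff \<mu> \<nu> lam 4 x \<noteq> 0" by (simp add: ode_coeff_def Dcoeff_def)
next
  fix k :: nat assume k: "k \<le> 4"
  let ?g = "\<lambda>j. if j = 0 then indicial_coeff \<mu> \<nu> k else if j = 2 then quadratic_coeff \<mu> \<nu> lam k
    else if j = 4 then quartic_coeff k else 0"
  have "(\<lambda>j. ?g j * complex_of_real x ^ j) sums
      (complex_of_real x ^ (4 - k) * ode_coeff \<mu> \<nu> lam k x / ode_coeff \<mu> \<nu> lam 4 x)"
    if "x \<in> {0<..<1}" for x
  proof -
    have "x > 0" using that by simp
    show ?thesis unfolding normalised_ode_coeff[OF k \<open>x > 0\<close>] by (rule even_quartic_sums)
  qed
  then show "\<exists>g. \<forall>x\<in>{0<..<1}. (\<lambda>j. g j * complex_of_real x ^ j) sums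
      (complex_of_real x ^ (4 - k) * ode_coeff \<mu> \<nu> lam k x / ode_coeff \<mu> \<nu> lam 4 x)"
    by (intro exI[of _ ?g]) blast
qed simp

lemma ode_indicial_poly:
  "indicial_poly (ode_coeff \<mu> \<nu> lam) 4 s = s * (s + \<mu>) * (s + \<nu>) * (s + \<mu> + \<nu>)"
proof -
  have "Lim (at_right 0) (\<lambda>x. (complex_of_real x)^(4-k) * ode_coeff \<mu> \<nu> lam k x / ode_coeff \<mu> \<nu> lam 4 x)
      = indicial_coeff \<mu> \<nu> k" if "k \<le> 4" for k
    by (rule even_quartic_limit[OF normalised_ode_coeff[OF that]])
  then have "indicial_poly (ode_coeff \<mu> \<nu> lam) 4 s = (\<Sum>k\<le>4. indicial_coeff \<mu> \<nu> k * (\<Prod>i<k. s - of_nat i))"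
    unfolding indicial_poly_def by (intro sum.cong) simp_all
  also have "\<dots> = s * (s + \<mu>) * (s + \<nu>) * (s + \<mu> + \<nu>)"
    unfolding sum_atMost_4 by (simp add: indicial_coeff_def eval_nat_numeral lessThan_Suc algebra_simps)
  finally show ?thesis .
qed

(* Bilinear concomitant of D_{mu,nu}: the boundary form of the Lagrange identity. *)
definition concomitant :: "complex \<Rightarrow> complex \<Rightarrow> complex \<Rightarrow> (nat \<Rightarrow> complex) \<Rightarrow> (nat \<Rightarrow> complex) \<Rightarrow> complex" where
  "concomitant \<mu> \<nu> y f g = (1+\<mu>)*(1+\<nu>)*(f 1 * g 0 - f 0 * g 1) + (3+\<mu>+\<nu>) * y * (f 2 * g 0 - f 0 * g 2)
     + y^2 * (f 3 * g 0 - f 2 * g 1 + f 1 * g 2 - f 0 * g 3) - 2 * y^2 * (f 1 * g 0 - f 0 * g 1)"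

lemma lagrange_identity:
  assumes p: "smooth_pos \<phi>" and q: "smooth_pos \<psi>" and y: "y > 0" and s: "complex_of_real s = \<mu> + \<nu> + 1"
  shows "((\<lambda>x. complex_of_real (x powr s) * concomitant \<mu> \<nu> (of_real x) (\<lambda>k. nderiv k \<phi> x) (\<lambda>k. cnj (nderiv k \<psi> x)))
     has_vector_derivative complex_of_real (y powr s) *
       (Dpoly \<mu> \<nu> (of_real y) (\<lambda>k. nderiv k \<phi> y) * cnj (nderiv 0 \<psi> y)
        - nderiv 0 \<phi> y * Dpoly \<mu> \<nu> (of_real y) (\<lambda>k. cnj (nderiv k \<psi> y)))) (at y)"
proof -
  have yn: "complex_of_real y \<noteq> 0" using y by simp
  show ?thesis unfolding concomitant_def
    by (rule derivative_eq_intros has_vector_derivative_powr[OF y] smooth_pos_derivatives[OF p y]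
        smooth_pos_derivatives[OF q y] refl has_vector_derivative_square)+
       (use yn in \<open>simp add: Dpoly_explicit s field_simps power2_eq_square\<close>)
qed

definition lagrange_boundary :: "complex \<Rightarrow> complex \<Rightarrow> real \<Rightarrow> cfun \<Rightarrow> cfun \<Rightarrow> real \<Rightarrow> complex" where
  "lagrange_boundary \<mu> \<nu> s \<phi> \<psi> x =
     complex_of_real (x powr s) * concomitant \<mu> \<nu> (of_real x) (\<lambda>k. nderiv k \<phi> x) (\<lambda>k. cnj (nderiv k \<psi> x))"

lemma cnj_Dop:
  assumes "\<mu> \<in> \<real>" "\<nu> \<in> \<real>" "smooth_pos \<psi>" "x > 0"
  shows "cnj (Dop \<mu> \<nu> \<psi> x) = Dpoly \<mu> \<nu> (of_real x) (\<lambda>k. cnj (nderiv k \<psi> x))"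
  using assms by (simp add: Dop_eq_Dpoly Dpoly_explicit Reals_cnj_iff)

lemma green_formula:
  assumes "\<mu> \<in> \<real>" "\<nu> \<in> \<real>" and p: "smooth_pos \<phi>" and q: "smooth_pos \<psi>"
    and s: "complex_of_real s = \<mu> + \<nu> + 1" and cd: "0 < c" "c \<le> d"
  shows "((\<lambda>x. complex_of_real (x powr s) * (Dop \<mu> \<nu> \<phi> x * cnj (\<psi> x) - \<phi> x * cnj (Dop \<mu> \<nu> \<psi> x)))
     has_integral (lagrange_boundary \<mu> \<nu> s \<phi> \<psi> d - lagrange_boundary \<mu> \<nu> s \<phi> \<psi> c)) {c..d}"
proof (rule fundamental_theorem_of_calculus[OF cd(2)])
  fix x assume "x \<in> {c..d}"
  then have x: "x > 0" using cd by auto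
  have "cnj (Dop \<mu> \<nu> \<psi> x) = Dpoly \<mu> \<nu> (of_real x) (\<lambda>k. cnj (nderiv k \<psi> x))"
    by (rule cnj_Dop[OF assms(1,2) q x])
  then show "(lagrange_boundary \<mu> \<nu> s \<phi> \<psi> has_vector_derivative
      complex_of_real (x powr s) * (Dop \<mu> \<nu> \<phi> x * cnj (\<psi> x) - \<phi> x * cnj (Dop \<mu> \<nu> \<psi> x))) (at x within {c..d})"
    unfolding lagrange_boundary_def
    using has_vector_derivative_at_within[OF lagrange_identity[OF p q x s]]
    by (simp add: Dop_eq_Dpoly[OF p x] nderiv.simps(1))
qed

lemma cc_smooth_pos_support:
  assumes "cc_smooth_pos f"
  obtains a b where "0 < a" "a \<le> b" "\<And>x. x \<notin> {a..b} \<Longrightarrow> f x = 0"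
    "\<And>k x. x > 0 \<Longrightarrow> x \<notin> {a..b} \<Longrightarrow> nderiv k f x = 0"
proof -
  obtain a b where ab: "0 < a" "a \<le> b" "\<And>x. x \<notin> {a..b} \<Longrightarrow> f x = 0"
    using assms unfolding cc_smooth_pos_def by blast
  define S where "S = {0<..<a} \<union> {b<..}"
  have "open S" unfolding S_def by auto
  have "\<forall>x\<in>S. nderiv k f x = 0" for k
  proof (induction k)
    case 0 then show ?case using ab(3) by (auto simp: S_def nderiv.simps(1))
  next
    case (Suc k)
    show ?case
    proof
      fix x assume "x \<in> S"
      have "vector_derivative (nderiv k f) (at x) = 0"
        by (rule vector_derivative_eq_on_open[OF \<open>open S\<close> \<open>x \<in> S\<close>, of _ "\<lambda>_. 0"]) (use Suc in auto)
      then show "nderiv (Suc k) f x = 0" by (simp add: nderiv.simps(2))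
    qed
  qed
  then have "\<And>k x. x > 0 \<Longrightarrow> x \<notin> {a..b} \<Longrightarrow> nderiv k f x = 0"
    by (auto simp: S_def not_le)
  with ab that show ?thesis by blast
qed

lemma common_support_interval:
  assumes p: "cc_smooth_pos \<phi>" and q: "cc_smooth_pos \<psi>"
  obtains c d where "0 < c" "c \<le> d" "\<And>x. x \<notin> {c..d} \<Longrightarrow> \<phi> x = 0" "\<And>x. x \<notin> {c..d} \<Longrightarrow> \<psi> x = 0"
    "\<And>k. nderiv k \<phi> c = 0" "\<And>k. nderiv k \<phi> d = 0"
proof -
  obtain a1 b1 where ab1: "0 < a1" "a1 \<le> b1" "\<And>x. x \<notin> {a1..b1} \<Longrightarrow> \<phi> x = 0"
    "\<And>k x. x > 0 \<Longrightarrow> x \<notin> {a1..b1} \<Longrightarrow> nderiv k \<phi> x = 0"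
    by (rule cc_smooth_pos_support[OF p]) blast
  obtain a2 b2 where ab2: "0 < a2" "a2 \<le> b2" "\<And>x. x \<notin> {a2..b2} \<Longrightarrow> \<psi> x = 0"
    by (rule cc_smooth_pos_support[OF q]) blast
  define c where "c = min a1 a2 / 2"
  define d where "d = max b1 b2 + 1"
  have c: "0 < c" "c < a1" "c < a2" and d: "b1 < d" "b2 < d" "c \<le> d"
    using ab1(1,2) ab2(1,2) by (auto simp: c_def d_def)
  show ?thesis
  proof (rule that)
    show "\<phi> x = 0" "\<psi> x = 0" if "x \<notin> {c..d}" for x
      using that ab1(3)[of x] ab2(3)[of x] c d by auto
    show "nderiv k \<phi> c = 0" "nderiv k \<phi> d = 0" for k
      using ab1(4)[of c k] ab1(4)[of d k] c d by auto
  qed (use c d in auto)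
qed

lemma nderiv_continuous_on:
  assumes "smooth_pos f" "0 < c"
  shows "continuous_on {c..d} (nderiv k f)"
  by (rule continuous_on_vector_derivative[of _ _ "\<lambda>x. nderiv (Suc k) f x"])
     (use assms in \<open>auto intro!: smooth_pos_has_derivative\<close>)

lemma Dop_continuous_on:
  assumes u: "smooth_pos u" and c: "0 < c"
  shows "continuous_on {c..d} (Dop \<mu> \<nu> u)"
proof -
  have "continuous_on {c..d} (\<lambda>x. Dpoly \<mu> \<nu> (of_real x) (\<lambda>k. nderiv k u x))"
    unfolding Dpoly_explicit using c
    by (auto intro!: continuous_intros nderiv_continuous_on[OF u c])
  then show ?thesis
    by (rule continuous_on_cong[THEN iffD1, rotated 2]) (use c in \<open>auto simp: Dop_eq_Dpoly[OF u]\<close>)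
qed

(* Symmetry of D_{mu,nu} on C_c^oo(R_+) in L^2(R_+, x^(mu+nu+1) dx) for all real mu, nu.
  Both integrands vanish outside an interval [c,d] containing the supports in its interior;
  there Green's formula applies with vanishing boundary terms. *)
lemma Dop_symmetric:
  assumes "\<mu> \<in> \<real>" "\<nu> \<in> \<real>" and p: "cc_smooth_pos \<phi>" and q: "cc_smooth_pos \<psi>"
  shows "(\<lambda>x. Dop \<mu> \<nu> \<phi> x * cnj (\<psi> x) * complex_of_real (x powr (Re \<mu> + Re \<nu> + 1)))
      integrable_on {0<..}
    \<and> (\<lambda>x. \<phi> x * cnj (Dop \<mu> \<nu> \<psi> x) * complex_of_real (x powr (Re \<mu> + Re \<nu> + 1)))
      integrable_on {0<..}
    \<and> integral {0<..} (\<lambda>x. Dop \<mu> \<nu> \<phi> x * cnj (\<psi> x) * complex_of_real (x powr (Re \<mu> + Re \<nu> + 1)))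
      = integral {0<..} (\<lambda>x. \<phi> x * cnj (Dop \<mu> \<nu> \<psi> x) * complex_of_real (x powr (Re \<mu> + Re \<nu> + 1)))"
    (is "?F1 integrable_on _ \<and> ?F2 integrable_on _ \<and> _")
proof -
  define s where "s = Re \<mu> + Re \<nu> + 1"
  have s: "complex_of_real s = \<mu> + \<nu> + 1"
    using assms(1,2) unfolding s_def by (simp add: complex_eq_iff complex_is_Real_iff)
  have sp: "smooth_pos \<phi>" "smooth_pos \<psi>" using p q by (simp_all add: cc_smooth_pos_def)
  obtain c d where c: "0 < c" "c \<le> d" and outside: "\<And>x. x \<notin> {c..d} \<Longrightarrow> \<phi> x = 0"
      "\<And>x. x \<notin> {c..d} \<Longrightarrow> \<psi> x = 0" and ends: "\<And>k. nderiv k \<phi> c = 0" "\<And>k. nderiv k \<phi> d = 0"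
    by (rule common_support_interval[OF p q]) blast
  define F1 where "F1 = ?F1"
  define F2 where "F2 = ?F2"
  have cont_\<psi>: "continuous_on {c..d} \<psi>" and cont_\<phi>: "continuous_on {c..d} \<phi>"
    using nderiv_continuous_on[OF sp(2) c(1), of d 0] nderiv_continuous_on[OF sp(1) c(1), of d 0]
    by (simp_all add: nderiv.simps(1))
  have "continuous_on {c..d} F1" "continuous_on {c..d} F2"
    unfolding F1_def F2_def using c(1)
    by (auto intro!: continuous_intros Dop_continuous_on sp cont_\<phi> cont_\<psi>)
  then have F12: "(F1 has_integral integral {c..d} F1) {c..d}" "(F2 has_integral integral {c..d} F2) {c..d}"
    by (simp_all add: integrable_continuous_interval integrable_integral)
  have "lagrange_boundary \<mu> \<nu> s \<phi> \<psi> c = 0" "lagrange_boundary \<mu> \<nu> s \<phi> \<psi> d = 0"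
    unfolding lagrange_boundary_def concomitant_def by (simp_all add: ends)
  then have "((\<lambda>x. F1 x - F2 x) has_integral 0) {c..d}"
    using green_formula[OF assms(1,2) sp s c]
    by (simp add: F1_def F2_def s_def algebra_simps)
  then have "integral {c..d} F1 - integral {c..d} F2 = 0"
    by (rule has_integral_unique[OF has_integral_diff[OF F12]])
  then have "integral {c..d} F1 = integral {c..d} F2" by simp
  moreover have "F1 x = 0" "F2 x = 0" if "x \<notin> {c..d}" for x
    using that unfolding F1_def F2_def by (simp_all add: outside)
  moreover have "{c..d} \<subseteq> {0<..}" using c by auto
  ultimately have "(F1 has_integral integral {c..d} F1) {0<..}" "(F2 has_integral integral {c..d} F1) {0<..}"
    using has_integral_on_superset F12 by metis+
  then show ?thesis unfolding F1_def F2_def by (auto simp: integral_unique has_integral_integrable)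
qed

lemma Dop_regular_singular:
  "\<exists>a. (\<forall>u. smooth_pos u \<longrightarrow> (\<forall>x>0. Dop \<mu> \<nu> u x - lam * u x = (\<Sum>k\<le>4. a k x * nderiv k u x)))
     \<and> regular_singular_at_0 a 4
     \<and> (\<forall>s. indicial_poly a 4 s = s * (s + \<mu>) * (s + \<nu>) * (s + \<mu> + \<nu>))"
  by (intro exI[of _ "ode_coeff \<mu> \<nu> lam"])
     (simp add: Dop_eigen_equation ode_regular_singular ode_indicial_poly)

theorem proposition2p1:
  fixes \<mu> \<nu> :: complex
  shows
  \<comment> \<open>(1) symmetry in mu, nu\<close>
  "(\<forall>u. smooth_pos u \<longrightarrow> (\<forall>x>0. Dop \<mu> \<nu> u x = Dop \<nu> \<mu> u x))
   \<comment> \<open>(2) regular singularity at 0 with exponents 0, -mu, -nu, -mu-nu\<close>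
   \<and> (\<forall>lam::complex. \<exists>a::nat \<Rightarrow> cfun.
        (\<forall>u. smooth_pos u \<longrightarrow>
           (\<forall>x>0. Dop \<mu> \<nu> u x - lam * u x = (\<Sum>k\<le>4. a k x * nderiv k u x)))
        \<and> regular_singular_at_0 a 4
        \<and> (\<forall>s. indicial_poly a 4 s = s * (s + \<mu>) * (s + \<nu>) * (s + \<mu> + \<nu>)))
   \<comment> \<open>(3) symmetry on C_c^infinity in L^2(R_+, x^(mu+nu+1) dx)\<close>
   \<and> ((\<mu> \<in> \<real> \<and> \<nu> \<in> \<real> \<and> Re \<mu> \<ge> -1 \<and> Re \<nu> \<ge> -1) \<longrightarrow>
        (\<forall>\<phi> \<psi>. cc_smooth_pos \<phi> \<and> cc_smooth_pos \<psi> \<longrightarrow>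
           (\<lambda>x. Dop \<mu> \<nu> \<phi> x * cnj (\<psi> x) * complex_of_real (x powr (Re \<mu> + Re \<nu> + 1)))
              integrable_on {0<..}
         \<and> (\<lambda>x. \<phi> x * cnj (Dop \<mu> \<nu> \<psi> x) * complex_of_real (x powr (Re \<mu> + Re \<nu> + 1)))
              integrable_on {0<..}
         \<and> integral {0<..} (\<lambda>x. Dop \<mu> \<nu> \<phi> x * cnj (\<psi> x) * complex_of_real (x powr (Re \<mu> + Re \<nu> + 1)))
           = integral {0<..} (\<lambda>x. \<phi> x * cnj (Dop \<mu> \<nu> \<psi> x) * complex_of_real (x powr (Re \<mu> + Re \<nu> + 1)))))
   \<comment> \<open>(5) factorisations for nu = -1 and nu = +1\<close>
   \<and> (\<forall>u. smooth_pos u \<longrightarrow> (\<forall>x>0.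
        Dop \<mu> (-1) u x = S_minus \<mu> (S_minus \<mu> u) x - (\<mu> + 1)^2 / 2 * u x))
   \<and> (\<forall>u. smooth_pos u \<longrightarrow> (\<forall>x>0.
        Dop \<mu> 1 u x = S_plus \<mu> (S_plus \<mu> u) x - ((\<mu> + 1)^2 / 2 + 2) * u x))"
proof -
  have "Dop \<mu> \<nu> u x = Dop \<nu> \<mu> u x" if "smooth_pos u" "x > 0" for u x
    using that by (simp add: Dop_eq_Dpoly Dpoly_sym)
  moreover have "Dop \<mu> (-1) u x = S_minus \<mu> (S_minus \<mu> u) x - (\<mu> + 1)^2 / 2 * u x"
    if "smooth_pos u" "x > 0" for u x
    using that by (simp add: Dop_eq_Dpoly S_minus_square)
  moreover have "Dop \<mu> 1 u x = S_plus \<mu> (S_plus \<mu> u) x - ((\<mu> + 1)^2 / 2 + 2) * u x"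
    if "smooth_pos u" "x > 0" for u x
    using that by (simp add: Dop_eq_Dpoly S_plus_square)
  ultimately show ?thesis
    using Dop_regular_singular[of \<mu> \<nu>] Dop_symmetric[of \<mu> \<nu>] by blast
qed

end
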